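(* Let $\delta$ be an ordinal with $\mathrm{cf}(\omega^\delta)=\kappa\ge\omega$, and suppose $\omega^\delta=\sum_{\xi<\kappa}\omega^{\delta_\xi}$, where $\delta_\xi\le\delta_\zeta$ whenever $\xi<\zeta<\kappa$, and $\mathrm{cf}(\omega^{\delta_\xi})\ge\kappa$ for all $\xi<\kappa$. Then $\mathcal P_\kappa\hookrightarrow_c\mathrm{sq}\,\mathbb P(\omega^\delta)$.
   Context: $\mathbb P(\omega^\delta)$ is the poset of subsets of $\omega^\delta$ order-isomorphic to $\omega^\delta$, ordered by $\subset$; $\mathrm{sq}$ denotes separative quotient (antisymmetric quotient of the separative modification $p\le^*q\iff\forall r\le p\,\exists s\le r\, s\le q$). For a cardinal $\kappa$, $\mathcal P_\kappa=(P(\kappa)/[\kappa]^{<\kappa})^+$, the nonzero elements of the quotient of $P(\kappa)$ by the ideal of subsets of size $<\kappa$. A map $f:\mathbb P\to\mathbb Q$ between preorders is a complete embedding ($\hookrightarrow_c$) iff (1) $p_1\le p_2\Rightarrow f(p_1)\le f(p_2)$; (2) $p_1\perp p_2\iff f(p_1)\perp f(p_2)$; (3) for every $q\in\mathbb Q$ there is $p\in\mathbb P$ such that $f(p')$ is compatible with $q$ for all $p'\le p$. $\mathbb P\hookrightarrow_c\mathbb Q$ means such an $f$ exists. *)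

theory Defs
  imports Main
begin

(* Ordinals are represented as well-order relations (Well_order, from Main);
   ordinal comparison is ordLeq / ordLess / ordIso, cardinals are card_of,
   and a cardinal kappa is a Card_order (initial ordinal) k with Field k = kappa. *)

section \<open>Ordinal exponentiation omega^d (finite-support functions, Cantor normal form)\<close>

definition opow_carrier :: "'a rel \<Rightarrow> ('a \<Rightarrow> nat) set" where
  "opow_carrier d = {f. (\<forall>x. x \<notin> Field d \<longrightarrow> f x = 0) \<and> finite {x. f x \<noteq> 0}}"

definition opow :: "'a rel \<Rightarrow> ('a \<Rightarrow> nat) rel" where
  "opow d = {(f, g). f \<in> opow_carrier d \<and> g \<in> opow_carrier d \<and>
      (f = g \<or> (\<exists>x. f x < g x \<and> (\<forall>y. f y \<noteq> g y \<longrightarrow> (y, x) \<in> d)))}"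

definition osum :: "'k rel \<Rightarrow> ('k \<Rightarrow> 'b rel) \<Rightarrow> ('k \<times> 'b) rel" where
  "osum k r = {((i, x), (j, y)). i \<in> Field k \<and> j \<in> Field k \<and> x \<in> Field (r i) \<and> y \<in> Field (r j) \<and>
      ((i \<noteq> j \<and> (i, j) \<in> k) \<or> (i = j \<and> (x, y) \<in> r i))}"

definition cofinal :: "'a rel \<Rightarrow> 'a set \<Rightarrow> bool" where
  "cofinal r A \<longleftrightarrow> A \<subseteq> Field r \<and> (\<forall>a \<in> Field r. \<exists>b \<in> A. (a, b) \<in> r)"

definition cof_ge :: "'a rel \<Rightarrow> 'k rel \<Rightarrow> bool" where
  "cof_ge r k \<longleftrightarrow> (\<forall>A. cofinal r A \<longrightarrow> (k, card_of A) \<in> ordLeq)"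

definition cof_eq :: "'a rel \<Rightarrow> 'k rel \<Rightarrow> bool" where
  "cof_eq r k \<longleftrightarrow> cof_ge r k \<and> (\<exists>A. cofinal r A \<and> (card_of A, k) \<in> ordIso)"

definition compat :: "'x set \<Rightarrow> ('x \<Rightarrow> 'x \<Rightarrow> bool) \<Rightarrow> 'x \<Rightarrow> 'x \<Rightarrow> bool" where
  "compat P le p q \<longleftrightarrow> (\<exists>r \<in> P. le r p \<and> le r q)"

definition sep_le :: "'x set \<Rightarrow> ('x \<Rightarrow> 'x \<Rightarrow> bool) \<Rightarrow> 'x \<Rightarrow> 'x \<Rightarrow> bool" where
  "sep_le P le p q \<longleftrightarrow> (\<forall>r \<in> P. le r p \<longrightarrow> (\<exists>s \<in> P. le s r \<and> le s q))"

definition aquot :: "'x set \<Rightarrow> ('x \<Rightarrow> 'x \<Rightarrow> bool) \<Rightarrow> 'x set set" where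
  "aquot P le = {{y \<in> P. le x y \<and> le y x} | x. x \<in> P}"

definition aquot_le :: "('x \<Rightarrow> 'x \<Rightarrow> bool) \<Rightarrow> 'x set \<Rightarrow> 'x set \<Rightarrow> bool" where
  "aquot_le le c e \<longleftrightarrow> (\<exists>x \<in> c. \<exists>y \<in> e. le x y)"

definition sq_carrier :: "'x set \<Rightarrow> ('x \<Rightarrow> 'x \<Rightarrow> bool) \<Rightarrow> 'x set set" where
  "sq_carrier P le = aquot P (sep_le P le)"

definition sq_le :: "'x set \<Rightarrow> ('x \<Rightarrow> 'x \<Rightarrow> bool) \<Rightarrow> 'x set \<Rightarrow> 'x set \<Rightarrow> bool" where
  "sq_le P le = aquot_le (sep_le P le)"

definition complete_embedding ::
  "'x set \<Rightarrow> ('x \<Rightarrow> 'x \<Rightarrow> bool) \<Rightarrow> 'y set \<Rightarrow> ('y \<Rightarrow> 'y \<Rightarrow> bool) \<Rightarrow> ('x \<Rightarrow> 'y) \<Rightarrow> bool" where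
  "complete_embedding P leP Q leQ f \<longleftrightarrow>
     (\<forall>p \<in> P. f p \<in> Q) \<and>
     (\<forall>p1 \<in> P. \<forall>p2 \<in> P. leP p1 p2 \<longrightarrow> leQ (f p1) (f p2)) \<and>
     (\<forall>p1 \<in> P. \<forall>p2 \<in> P. \<not> compat P leP p1 p2 \<longleftrightarrow> \<not> compat Q leQ (f p1) (f p2)) \<and>
     (\<forall>q \<in> Q. \<exists>p \<in> P. \<forall>p' \<in> P. leP p' p \<longrightarrow> compat Q leQ (f p') q)"

text \<open>P(omega^d): subsets of Field (omega^d) order-isomorphic to omega^d, ordered by inclusion\<close>
definition Pord :: "'a rel \<Rightarrow> ('a \<Rightarrow> nat) set set" where
  "Pord d = {A. A \<subseteq> Field (opow d) \<and> (Restr (opow d) A, opow d) \<in> ordIso}"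

text \<open>P_kappa = (P(kappa)/[kappa]^{<kappa})^+ : first the preorder on representatives
  (X <= Y iff X - Y is small), then its antisymmetric quotient.\<close>
definition Pk_pre :: "'k rel \<Rightarrow> 'k set set" where
  "Pk_pre k = {X. X \<subseteq> Field k \<and> (card_of X, k) \<notin> ordLess}"

definition Pk_pre_le :: "'k rel \<Rightarrow> 'k set \<Rightarrow> 'k set \<Rightarrow> bool" where
  "Pk_pre_le k X Y \<longleftrightarrow> (card_of (X - Y), k) \<in> ordLess"

definition Pk :: "'k rel \<Rightarrow> 'k set set set" where
  "Pk k = aquot (Pk_pre k) (Pk_pre_le k)"

definition Pk_le :: "'k rel \<Rightarrow> 'k set set \<Rightarrow> 'k set set \<Rightarrow> bool" where
  "Pk_le k = aquot_le (Pk_pre_le k)"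

end

theory Submission
  imports Defs
begin

text \<open>
  Write \<open>\<omega>\<^sup>\<delta>\<close> as the ordered sum \<open>W\<close> of blocks \<open>B\<^sub>\<xi> = \<omega>\<^sup>\<delta>\<^sub>\<xi>\<close>, \<open>\<xi> < \<kappa>\<close>, and send a set
  \<open>X \<subseteq> \<kappa>\<close> of size \<open>\<kappa>\<close> to the union of the blocks indexed by \<open>X\<close>. Two facts drive everything:
  each block embeds into the part of any later block above a given point (the \<open>\<delta>\<^sub>\<xi>\<close> increase and
  \<open>\<omega>\<^sup>\<delta>\<^sub>\<xi>\<close> is indecomposable), and \<open>cf(B\<^sub>\<xi>) \<ge> \<kappa>\<close>. The first shows that such a union contains a
  copy of \<open>W\<close>. For a copy \<open>A\<close> with isomorphism \<open>g : W \<cong> A\<close>, the block index of \<open>g x\<close> is monotone in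
  \<open>x\<close> and bounded on each block, so by the second fact it is eventually constant there; the set
  \<open>X\<^sub>A\<close> of these eventual values has size \<open>\<kappa>\<close>, and whenever \<open>Y\<close> meets \<open>X\<^sub>A\<close> in \<open>\<kappa>\<close> points, re-embedding
  \<open>W\<close> into the tails of suitable blocks and composing with \<open>g\<close> gives a copy inside \<open>A\<close> and inside the
  blocks indexed by \<open>Y\<close>. Hence \<open>X \<mapsto> \<Union>\<^sub>\<xi>\<^sub>\<in>\<^sub>X B\<^sub>\<xi>\<close> is a complete embedding of preorders into the
  separative modification of \<open>\<bbbP>(\<omega>\<^sup>\<delta>)\<close>, and complete embeddings pass to antisymmetric quotients.
\<close>

unbundle cardinal_syntax

section \<open>Strictly increasing maps between well-orders\<close>

lemma well_order_refl: "Well_order r \<Longrightarrow> x \<in> Field r \<Longrightarrow> (x, x) \<in> r"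
  by (simp add: order_on_defs refl_on_def)

lemma well_order_trans: "Well_order r \<Longrightarrow> (x, y) \<in> r \<Longrightarrow> (y, z) \<in> r \<Longrightarrow> (x, z) \<in> r"
  by (meson order_on_defs trans_def)

lemma well_order_antisym: "Well_order r \<Longrightarrow> (x, y) \<in> r \<Longrightarrow> (y, x) \<in> r \<Longrightarrow> x = y"
  by (meson order_on_defs antisym_def)

lemma well_order_not_le:
  "Well_order r \<Longrightarrow> x \<in> Field r \<Longrightarrow> y \<in> Field r \<Longrightarrow> (x, y) \<notin> r \<Longrightarrow> (y, x) \<in> r \<and> y \<noteq> x"
  by (metis order_on_defs total_on_def well_order_refl)

lemma well_order_finite_has_greatest:
  assumes r: "Well_order r" and "finite D" "D \<noteq> {}" "D \<subseteq> Field r"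
  shows "\<exists>z\<in>D. \<forall>y\<in>D. (y, z) \<in> r"
  using assms(2-4)
proof (induction D rule: finite_ne_induct)
  case (singleton x)
  then show ?case using well_order_refl[OF r] by auto
next
  case (insert x F)
  then obtain z where z: "z \<in> F" "\<forall>y\<in>F. (y, z) \<in> r" by auto
  show ?case
  proof (cases "(x, z) \<in> r")
    case True
    then show ?thesis using z by auto
  next
    case False
    then have "(z, x) \<in> r" using well_order_not_le[OF r] insert z by blast
    then show ?thesis using z insert well_order_trans[OF r] well_order_refl[OF r] by blast
  qed
qed

definition strict_mono_rel :: "'a rel \<Rightarrow> 'b rel \<Rightarrow> ('a \<Rightarrow> 'b) \<Rightarrow> bool" where
  "strict_mono_rel r r' f \<longleftrightarrow> (\<forall>x \<in> Field r. f x \<in> Field r') \<and>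
     (\<forall>x y. (x, y) \<in> r \<longrightarrow> x \<noteq> y \<longrightarrow> (f x, f y) \<in> r' \<and> f x \<noteq> f y)"

lemma strict_mono_rel_comp:
  "strict_mono_rel r r' f \<Longrightarrow> strict_mono_rel r' r'' g \<Longrightarrow> strict_mono_rel r r'' (g \<circ> f)"
  unfolding strict_mono_rel_def by auto

lemma strict_mono_rel_inj_on: "Well_order r \<Longrightarrow> strict_mono_rel r r' f \<Longrightarrow> inj_on f (Field r)"
  unfolding inj_on_def strict_mono_rel_def by (metis well_order_not_le)

lemma strict_mono_rel_into_Restr:
  "strict_mono_rel r (Restr r' A) f \<Longrightarrow> strict_mono_rel r r' f \<and> f ` Field r \<subseteq> A"
  unfolding strict_mono_rel_def Field_def by blast

lemma strict_mono_rel_Restr_target: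
  assumes r': "Well_order r'" and f: "strict_mono_rel r r' f" and A: "f ` Field r \<subseteq> A"
  shows "strict_mono_rel r (Restr r' A) f"
  unfolding strict_mono_rel_def
proof (intro conjI allI impI ballI)
  fix x assume "x \<in> Field r"
  then have "(f x, f x) \<in> Restr r' A" using f A well_order_refl[OF r'] unfolding strict_mono_rel_def by blast
  then show "f x \<in> Field (Restr r' A)" by (rule FieldI1)
next
  fix x y assume "(x, y) \<in> r" "x \<noteq> y"
  then show "(f x, f y) \<in> Restr r' A" "f x \<noteq> f y"
    using f A unfolding strict_mono_rel_def by (auto intro: FieldI1 FieldI2)
qed

lemma iso_strict_mono_rel: "iso r r' f \<Longrightarrow> strict_mono_rel r r' f"
  unfolding strict_mono_rel_def using iso_Field iso_forward iso_imp_inj_on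
  by (metis FieldI1 FieldI2 imageI inj_on_contraD)

lemma iso_inv_strict_mono_rel: "iso r r' f \<Longrightarrow> strict_mono_rel r' r (inv_into (Field r) f)"
  unfolding strict_mono_rel_def using iso_backward iso_backward_Field iso_Field
  by (metis FieldI1 FieldI2 f_inv_into_f)

lemma embed_strict_mono_rel: "Well_order r \<Longrightarrow> embed r r' f \<Longrightarrow> strict_mono_rel r r' f"
  unfolding strict_mono_rel_def
  using embed_Field embed_compat embed_inj_on
  by (metis BNF_Wellorder_Embedding.compat_def FieldI1 FieldI2 image_subset_iff inj_onD)

lemma ordLeq_strict_mono_rel: "r \<le>o r' \<Longrightarrow> \<exists>f. strict_mono_rel r r' f"
  unfolding ordLeq_def using embed_strict_mono_rel by blast

lemma strict_mono_rel_inflationary: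
  assumes r: "Well_order r" and f: "strict_mono_rel r r f" and x: "x \<in> Field r"
  shows "(x, f x) \<in> r"
proof (rule ccontr)
  assume "(x, f x) \<notin> r"
  let ?M = "{x \<in> Field r. (x, f x) \<notin> r}"
  have "wf (r - Id)" using r by (simp add: well_order_on_def)
  moreover have "x \<in> ?M" using x \<open>(x, f x) \<notin> r\<close> by auto
  ultimately obtain m where m: "m \<in> ?M" and min: "\<And>y. (y, m) \<in> r - Id \<Longrightarrow> y \<notin> ?M"
    using wf_eq_minimal[THEN iffD1, rule_format, of "r - Id" x ?M] by blast
  have fm: "f m \<in> Field r" using f m unfolding strict_mono_rel_def by auto
  have less: "(f m, m) \<in> r \<and> f m \<noteq> m" using well_order_not_le[OF r] m fm by blast
  then have "(f (f m), f m) \<in> r \<and> f (f m) \<noteq> f m" using f unfolding strict_mono_rel_def by blast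
  then have "f m \<in> ?M" using fm well_order_antisym[OF r] by blast
  moreover have "(f m, m) \<in> r - Id" using less by auto
  ultimately show False using min by blast
qed

lemma strict_mono_rel_ordLeq:
  assumes r: "Well_order r" and r': "Well_order r'" and f: "strict_mono_rel r r' f"
  shows "r \<le>o r'"
proof (rule ccontr)
  assume "\<not> r \<le>o r'"
  then have "r' <o r" using ordLess_or_ordLeq[OF r' r] by blast
  then obtain a where a: "a \<in> Field r" and "r' =o Restr r (underS r a)"
    using ordLess_iff_ordIso_Restr[OF r r'] by blast
  then obtain g where g: "iso r' (Restr r (underS r a)) g" unfolding ordIso_def by blast
  have "strict_mono_rel r' r g \<and> g ` Field r' \<subseteq> underS r a"
    using strict_mono_rel_into_Restr[OF iso_strict_mono_rel[OF g]] .
  then have "(a, g (f a)) \<in> r" and "g (f a) \<in> underS r a"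
    using strict_mono_rel_inflationary[OF r strict_mono_rel_comp[OF f] a] f a
    unfolding strict_mono_rel_def by auto
  then show False using well_order_antisym[OF r] by (metis underS_E)
qed

lemma Restr_ordLeq: "Well_order r \<Longrightarrow> Restr r A \<le>o r"
proof -
  assume r: "Well_order r"
  have "strict_mono_rel (Restr r A) r id" unfolding strict_mono_rel_def Field_def by auto
  then show ?thesis using strict_mono_rel_ordLeq[OF Well_order_Restr[OF r] r] by blast
qed

lemma Restr_mono_ordLeq: "Well_order r \<Longrightarrow> A \<subseteq> B \<Longrightarrow> Restr r A \<le>o Restr r B"
  using Restr_ordLeq[OF Well_order_Restr, of r B A] by (metis Restr_subset)

lemma strict_mono_rel_image_ordIso:
  assumes r: "Well_order r" and f: "strict_mono_rel r r f"
  shows "Restr r (f ` Field r) =o r"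
proof -
  have "r \<le>o Restr r (f ` Field r)"
    using strict_mono_rel_ordLeq[OF r Well_order_Restr[OF r] strict_mono_rel_Restr_target[OF r f]] by blast
  then show ?thesis using Restr_ordLeq[OF r] ordIso_iff_ordLeq by blast
qed

lemma ordIso_Restr_unbounded:
  assumes r: "Well_order r" and A: "A \<subseteq> Field r" "Restr r A =o r" and p: "p \<in> Field r"
  shows "\<exists>a\<in>A. (p, a) \<in> r"
proof (rule ccontr)
  assume "\<not> ?thesis"
  then have "A \<subseteq> underS r p" using A(1) well_order_not_le[OF r p] by (auto simp: underS_def)
  then have "Restr r A <o r"
    using Restr_mono_ordLeq[OF r] underS_Restr_ordLess[OF r] p ordLeq_ordLess_trans by blast
  then show False using A(2) not_ordLess_ordIso by blast
qed

section \<open>Sets of size less than an infinite cardinal\<close>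

definition small :: "'k rel \<Rightarrow> 'x set \<Rightarrow> bool" where
  "small k X \<longleftrightarrow> |X| <o k"

lemma small_subset: "X \<subseteq> Y \<Longrightarrow> small k Y \<Longrightarrow> small k X"
  unfolding small_def using card_of_mono1 ordLeq_ordLess_trans by blast

lemma small_image: "small k X \<Longrightarrow> small k (f ` X)"
  unfolding small_def using card_of_image ordLeq_ordLess_trans by blast

lemma cofinal_not_small: "cof_ge r k \<Longrightarrow> cofinal r A \<Longrightarrow> \<not> small k A"
  unfolding cof_ge_def small_def using not_ordLess_ordLeq by blast

lemma Pk_pre_iff: "X \<in> Pk_pre k \<longleftrightarrow> X \<subseteq> Field k \<and> \<not> small k X"
  unfolding Pk_pre_def small_def by simp

lemma Pk_pre_le_iff: "Pk_pre_le k X Y \<longleftrightarrow> small k (X - Y)"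
  unfolding Pk_pre_le_def small_def ..

context
  fixes k :: "'k rel"
  assumes k: "Card_order k" and k_inf: "infinite (Field k)"
begin

lemma small_finite: "finite X \<Longrightarrow> small k X"
  unfolding small_def
  using finite_ordLess_infinite[OF card_of_Well_order card_order_on_well_order_on[OF k]] k_inf
  by (simp add: Field_card_of)

lemma small_Un: "small k X \<Longrightarrow> small k Y \<Longrightarrow> small k (X \<union> Y)"
  unfolding small_def using card_of_Un_ordLess_infinite_Field[OF k_inf k] by blast

lemma small_Diff_trans: "small k (X - Y) \<Longrightarrow> small k (Y - Z) \<Longrightarrow> small k (X - Z)"
  using small_Un small_subset[of "X - Z" "(X - Y) \<union> (Y - Z)"] by blast

lemma small_under: "a \<in> Field k \<Longrightarrow> small k (under k a)"
proof -
  assume a: "a \<in> Field k"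
  have "small k (underS k a \<union> {a})"
    using small_Un[OF _ small_finite] card_of_underS[OF k a] unfolding small_def by blast
  then show ?thesis by (rule small_subset[rotated]) (auto simp: under_def underS_def)
qed

lemma not_small_iff: "\<not> small k X \<longleftrightarrow> k \<le>o |X|"
  unfolding small_def using k not_ordLess_iff_ordLeq card_of_Well_order card_order_on_well_order_on
  by blast

lemma not_small_Restr_ordLeq: "X \<subseteq> Field k \<Longrightarrow> \<not> small k X \<Longrightarrow> k \<le>o Restr k X"
  using card_of_least[OF well_order_on_Restr[OF card_order_on_well_order_on[OF k]]]
    not_small_iff ordLeq_transitive by blast

lemma reflp_on_Pk_pre_le: "reflp_on (Pk_pre k) (Pk_pre_le k)"
  unfolding reflp_on_def Pk_pre_le_iff by (simp add: small_finite)

lemma transp_on_Pk_pre_le: "transp_on (Pk_pre k) (Pk_pre_le k)"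
  unfolding transp_on_def Pk_pre_le_iff using small_Diff_trans by blast

lemma compat_Pk_pre_iff:
  assumes "X \<in> Pk_pre k" "Y \<in> Pk_pre k"
  shows "compat (Pk_pre k) (Pk_pre_le k) X Y \<longleftrightarrow> \<not> small k (X \<inter> Y)"
proof
  assume "compat (Pk_pre k) (Pk_pre_le k) X Y"
  then obtain Z where Z: "Z \<in> Pk_pre k" "small k (Z - X)" "small k (Z - Y)"
    unfolding compat_def Pk_pre_le_iff by blast
  show "\<not> small k (X \<inter> Y)"
  proof
    assume "small k (X \<inter> Y)"
    then have "small k ((Z - X) \<union> (Z - Y) \<union> (X \<inter> Y))" using Z small_Un by blast
    then have "small k Z" by (rule small_subset[rotated]) blast
    then show False using Z(1) unfolding Pk_pre_iff by blast
  qed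
next
  assume "\<not> small k (X \<inter> Y)"
  moreover have "X \<inter> Y \<subseteq> Field k" using assms unfolding Pk_pre_iff by blast
  moreover have "small k (X \<inter> Y - X)" "small k (X \<inter> Y - Y)"
    using small_finite[of "{}"] by (simp_all add: Diff_eq)
  ultimately show "compat (Pk_pre k) (Pk_pre_le k) X Y"
    unfolding compat_def Pk_pre_le_iff by (intro bexI[of _ "X \<inter> Y"]) (simp_all add: Pk_pre_iff)
qed

end

section \<open>Antisymmetric quotients and separative modifications\<close>

definition aquot_class :: "'x set \<Rightarrow> ('x \<Rightarrow> 'x \<Rightarrow> bool) \<Rightarrow> 'x \<Rightarrow> 'x set" where
  "aquot_class P le x = {y \<in> P. le x y \<and> le y x}"

lemma aquot_eq_image: "aquot P le = aquot_class P le ` P"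
  unfolding aquot_def aquot_class_def by blast

context
  fixes P :: "'x set" and le :: "'x \<Rightarrow> 'x \<Rightarrow> bool"
  assumes refl: "reflp_on P le" and trans: "transp_on P le"
begin

lemma aquot_class_self: "x \<in> P \<Longrightarrow> x \<in> aquot_class P le x"
  using refl unfolding aquot_class_def reflp_on_def by blast

lemma aquot_class_eq: "x \<in> P \<Longrightarrow> y \<in> aquot_class P le x \<Longrightarrow> aquot_class P le y = aquot_class P le x"
  unfolding aquot_class_def using transp_onD[OF trans] by blast

lemma aquot_some_class:
  assumes "c \<in> aquot P le"
  shows "(SOME x. x \<in> c) \<in> P \<and> aquot_class P le (SOME x. x \<in> c) = c"
proof -
  obtain x where x: "x \<in> P" and c: "c = aquot_class P le x"
    using assms unfolding aquot_def aquot_class_def by blast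
  have some: "(SOME y. y \<in> aquot_class P le x) \<in> aquot_class P le x"
    using aquot_class_self[OF x] by (rule someI)
  then have "(SOME y. y \<in> aquot_class P le x) \<in> P" unfolding aquot_class_def by blast
  with aquot_class_eq[OF x some] show ?thesis unfolding c by blast
qed

lemma aquot_le_class_iff:
  assumes x: "x \<in> P" and y: "y \<in> P"
  shows "aquot_le le (aquot_class P le x) (aquot_class P le y) \<longleftrightarrow> le x y"
proof
  assume "aquot_le le (aquot_class P le x) (aquot_class P le y)"
  then obtain x' y' where x': "x' \<in> P" "le x x'" and y': "y' \<in> P" "le y' y" and "le x' y'"
    unfolding aquot_le_def aquot_class_def by blast
  then have "le x y'" using transp_onD[OF trans x x'(1) y'(1)] by blast
  then show "le x y" using transp_onD[OF trans x y'(1) y] y' by blast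
next
  assume "le x y"
  then show "aquot_le le (aquot_class P le x) (aquot_class P le y)"
    using aquot_class_self[OF x] aquot_class_self[OF y] unfolding aquot_le_def by blast
qed

lemma compat_aquot_class_iff:
  assumes "x \<in> P" "y \<in> P"
  shows "compat (aquot P le) (aquot_le le) (aquot_class P le x) (aquot_class P le y) \<longleftrightarrow> compat P le x y"
  unfolding compat_def aquot_eq_image using aquot_le_class_iff assms by blast

lemma aquot_le_iff_some:
  assumes "c1 \<in> aquot P le" "c2 \<in> aquot P le"
  shows "aquot_le le c1 c2 \<longleftrightarrow> le (SOME x. x \<in> c1) (SOME x. x \<in> c2)"
  using aquot_le_class_iff[OF conjunct1[OF aquot_some_class[OF assms(1)]]
      conjunct1[OF aquot_some_class[OF assms(2)]]]
  by (simp only: conjunct2[OF aquot_some_class[OF assms(1)]] conjunct2[OF aquot_some_class[OF assms(2)]])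

lemma compat_aquot_iff_some:
  assumes "c1 \<in> aquot P le" "c2 \<in> aquot P le"
  shows "compat (aquot P le) (aquot_le le) c1 c2 \<longleftrightarrow> compat P le (SOME x. x \<in> c1) (SOME x. x \<in> c2)"
  using compat_aquot_class_iff[OF conjunct1[OF aquot_some_class[OF assms(1)]]
      conjunct1[OF aquot_some_class[OF assms(2)]]]
  by (simp only: conjunct2[OF aquot_some_class[OF assms(1)]] conjunct2[OF aquot_some_class[OF assms(2)]])

lemma le_imp_sep_le: "p \<in> P \<Longrightarrow> q \<in> P \<Longrightarrow> le p q \<Longrightarrow> sep_le P le p q"
  using refl trans unfolding sep_le_def reflp_on_def transp_on_def by blast

lemma reflp_on_sep_le: "reflp_on P (sep_le P le)"
  using le_imp_sep_le refl unfolding reflp_on_def by blast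

lemma transp_on_sep_le: "transp_on P (sep_le P le)"
proof (rule transp_onI)
  fix p q r assume pq: "sep_le P le p q" and qr: "sep_le P le q r"
  show "sep_le P le p r" unfolding sep_le_def
  proof (intro ballI impI)
    fix t assume t: "t \<in> P" "le t p"
    then obtain s where s: "s \<in> P" "le s t" "le s q" using pq unfolding sep_le_def by blast
    then obtain s' where s': "s' \<in> P" "le s' s" "le s' r" using qr unfolding sep_le_def by blast
    then have "le s' t" using transp_onD[OF trans s'(1) s(1) t(1)] s by blast
    then show "\<exists>s\<in>P. le s t \<and> le s r" using s' by blast
  qed
qed

lemma compat_sep_le_iff:
  assumes p: "p \<in> P" and q: "q \<in> P"
  shows "compat P (sep_le P le) p q \<longleftrightarrow> compat P le p q"
proof
  assume "compat P (sep_le P le) p q"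
  then obtain r where r: "r \<in> P" "sep_le P le r p" "sep_le P le r q" unfolding compat_def by blast
  then obtain s where s: "s \<in> P" "le s r" "le s p"
    using reflp_onD[OF refl] unfolding sep_le_def by blast
  then have "sep_le P le s q"
    using transp_onD[OF transp_on_sep_le] le_imp_sep_le r q by blast
  then obtain t where t: "t \<in> P" "le t s" "le t q"
    using s reflp_onD[OF refl] unfolding sep_le_def by blast
  then have "le t p" using transp_onD[OF trans] s p by blast
  then show "compat P le p q" using t unfolding compat_def by blast
next
  assume "compat P le p q"
  then obtain r where r: "r \<in> P" "le r p" "le r q" unfolding compat_def by blast
  then show "compat P (sep_le P le) p q"
    using le_imp_sep_le[OF r(1) p r(2)] le_imp_sep_le[OF r(1) q r(3)] unfolding compat_def by blast
qed

end

lemma complete_embedding_aquot: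
  assumes P: "reflp_on P leP" "transp_on P leP" and Q: "reflp_on Q leQ" "transp_on Q leQ"
    and f: "complete_embedding P leP Q leQ f"
  shows "complete_embedding (aquot P leP) (aquot_le leP) (aquot Q leQ) (aquot_le leQ)
           (\<lambda>c. aquot_class Q leQ (f (SOME x. x \<in> c)))"
proof -
  let ?rep = "\<lambda>c. SOME x. x \<in> c" and ?F = "\<lambda>c. aquot_class Q leQ (f (SOME x. x \<in> c))"
  have fQ: "\<And>p. p \<in> P \<Longrightarrow> f p \<in> Q"
    and f_mono: "\<And>p1 p2. p1 \<in> P \<Longrightarrow> p2 \<in> P \<Longrightarrow> leP p1 p2 \<Longrightarrow> leQ (f p1) (f p2)"
    and f_compat: "\<And>p1 p2. p1 \<in> P \<Longrightarrow> p2 \<in> P \<Longrightarrow> compat P leP p1 p2 \<longleftrightarrow> compat Q leQ (f p1) (f p2)"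
    and f_dense: "\<And>q. q \<in> Q \<Longrightarrow> \<exists>p\<in>P. \<forall>p'\<in>P. leP p' p \<longrightarrow> compat Q leQ (f p') q"
    using f unfolding complete_embedding_def by blast+
  have rep: "?rep c \<in> P" if "c \<in> aquot P leP" for c
    using aquot_some_class[OF P that] by blast
  show ?thesis
    unfolding complete_embedding_def
  proof (intro conjI ballI impI)
    fix c assume "c \<in> aquot P leP"
    then have "f (?rep c) \<in> Q" by (intro fQ rep)
    then show "?F c \<in> aquot Q leQ" unfolding aquot_eq_image by (rule imageI)
  next
    fix c1 c2 assume c: "c1 \<in> aquot P leP" "c2 \<in> aquot P leP" and "aquot_le leP c1 c2"
    then have "leQ (f (?rep c1)) (f (?rep c2))" using f_mono rep aquot_le_iff_some[OF P] by blast
    then show "aquot_le leQ (?F c1) (?F c2)"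
      using aquot_le_class_iff[OF Q fQ[OF rep[OF c(1)]] fQ[OF rep[OF c(2)]]] by blast
  next
    fix c1 c2 assume c: "c1 \<in> aquot P leP" "c2 \<in> aquot P leP"
    show "(\<not> compat (aquot P leP) (aquot_le leP) c1 c2) \<longleftrightarrow>
        (\<not> compat (aquot Q leQ) (aquot_le leQ) (?F c1) (?F c2))"
      using compat_aquot_iff_some[OF P c] f_compat[OF rep[OF c(1)] rep[OF c(2)]]
        compat_aquot_class_iff[OF Q fQ[OF rep[OF c(1)]] fQ[OF rep[OF c(2)]]] by blast
  next
    fix q assume "q \<in> aquot Q leQ"
    then obtain y where y: "y \<in> Q" "q = aquot_class Q leQ y" unfolding aquot_eq_image by blast
    then obtain p where p: "p \<in> P" and dense: "\<forall>p'\<in>P. leP p' p \<longrightarrow> compat Q leQ (f p') y"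
      using f_dense by blast
    have "compat (aquot Q leQ) (aquot_le leQ) (?F c') q"
      if c': "c' \<in> aquot P leP" "aquot_le leP c' (aquot_class P leP p)" for c'
    proof -
      have "leP (?rep c') p"
        using c'(2) aquot_le_class_iff[OF P rep[OF c'(1)] p] aquot_some_class[OF P c'(1)] by simp
      then have "compat Q leQ (f (?rep c')) y" using dense rep[OF c'(1)] by blast
      then show ?thesis
        using compat_aquot_class_iff[OF Q fQ[OF rep[OF c'(1)]] y(1)] y(2) by blast
    qed
    moreover have "aquot_class P leP p \<in> aquot P leP" using p unfolding aquot_eq_image by blast
    ultimately show "\<exists>p\<in>aquot P leP. \<forall>p'\<in>aquot P leP. aquot_le leP p' p \<longrightarrow>
        compat (aquot Q leQ) (aquot_le leQ) (?F p') q" by blast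
  qed
qed

section \<open>Ordinal exponentiation and ordinal sums\<close>

lemma Field_opow: "Field (opow e) = opow_carrier e"
  unfolding Field_def opow_def by auto

lemma opow_iff: "(f, g) \<in> opow e \<longleftrightarrow> f \<in> opow_carrier e \<and> g \<in> opow_carrier e \<and>
      (f = g \<or> (\<exists>x. f x < g x \<and> (\<forall>y. f y \<noteq> g y \<longrightarrow> (y, x) \<in> e)))"
  unfolding opow_def by simp

lemma opow_carrier_zero: "f \<in> opow_carrier e \<Longrightarrow> x \<notin> Field e \<Longrightarrow> f x = 0"
  unfolding opow_carrier_def by blast

lemma opow_carrier_finite_support: "f \<in> opow_carrier e \<Longrightarrow> finite {x. f x \<noteq> 0}"
  unfolding opow_carrier_def by blast

lemma opow_carrier_add: "f \<in> opow_carrier e \<Longrightarrow> g \<in> opow_carrier e \<Longrightarrow> (\<lambda>x. f x + g x) \<in> opow_carrier e"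
proof -
  assume f: "f \<in> opow_carrier e" and g: "g \<in> opow_carrier e"
  have "{x. f x + g x \<noteq> 0} \<subseteq> {x. f x \<noteq> 0} \<union> {x. g x \<noteq> 0}" by auto
  then show ?thesis
    using f g unfolding opow_carrier_def by (auto intro: finite_subset)
qed

lemma finite_Field_opow_if_empty: "Field e = {} \<Longrightarrow> finite (Field (opow e))"
proof -
  assume "Field e = {}"
  then have "Field (opow e) \<subseteq> {\<lambda>_. 0}" unfolding Field_opow using opow_carrier_zero by fastforce
  then show ?thesis using finite_subset by blast
qed

lemma opow_carrier_support_bound:
  assumes e: "Well_order e" and ne: "Field e \<noteq> {}" and a: "a \<in> opow_carrier e"
  shows "\<exists>m\<in>Field e. \<forall>w. (m, w) \<in> e \<and> w \<noteq> m \<longrightarrow> a w = 0"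
proof (cases "{w. a w \<noteq> 0} = {}")
  case True
  obtain m where "m \<in> Field e" using ne by blast
  then show ?thesis using True by (simp, blast)
next
  case False
  have sub: "{w. a w \<noteq> 0} \<subseteq> Field e"
    using opow_carrier_zero[OF a] by (auto intro: ccontr)
  then obtain z where z: "z \<in> {w. a w \<noteq> 0}" "\<forall>y\<in>{w. a w \<noteq> 0}. (y, z) \<in> e"
    using well_order_finite_has_greatest[OF e opow_carrier_finite_support[OF a] False] by blast
  have "\<forall>w. (z, w) \<in> e \<and> w \<noteq> z \<longrightarrow> a w = 0" using z(2) well_order_antisym[OF e] by blast
  then show ?thesis using z(1) sub by blast
qed

lemma opow_translation_strict_mono:
  assumes c: "c \<in> opow_carrier e"
  shows "strict_mono_rel (opow e) (opow e) (\<lambda>x w. x w + c w)"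
  unfolding strict_mono_rel_def Field_opow
proof (intro conjI allI impI ballI)
  fix x assume "x \<in> opow_carrier e"
  then show "(\<lambda>w. x w + c w) \<in> opow_carrier e" using opow_carrier_add c by blast
next
  fix x y assume xy: "(x, y) \<in> opow e" "x \<noteq> y"
  then obtain z where "x z < y z" "\<forall>w. x w \<noteq> y w \<longrightarrow> (w, z) \<in> e" unfolding opow_iff by blast
  then show "((\<lambda>w. x w + c w), (\<lambda>w. y w + c w)) \<in> opow e" "(\<lambda>w. x w + c w) \<noteq> (\<lambda>w. y w + c w)"
    using xy opow_carrier_add c unfolding opow_iff by (auto dest: fun_cong[of _ _ z])
qed

text \<open>Indecomposability of \<open>\<omega>\<^sup>e\<close>: adding a large enough multiple of a point above the support of
  \<open>a\<close> embeds \<open>\<omega>\<^sup>e\<close> into the part strictly above \<open>a\<close>.\<close>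
lemma opow_ordLeq_above:
  assumes e: "Well_order e" and ne: "Field e \<noteq> {}" and wo: "Well_order (opow e)"
    and a: "a \<in> Field (opow e)"
  shows "opow e \<le>o Restr (opow e) {z. (a, z) \<in> opow e \<and> z \<noteq> a}"
proof -
  have aC: "a \<in> opow_carrier e" using a unfolding Field_opow .
  obtain m where m: "m \<in> Field e" "\<forall>w. (m, w) \<in> e \<and> w \<noteq> m \<longrightarrow> a w = 0"
    using opow_carrier_support_bound[OF e ne aC] by blast
  define c where "c w = (if w = m then Suc (a m) else 0)" for w
  have c: "c \<in> opow_carrier e" using m(1) unfolding opow_carrier_def c_def by auto
  have above: "(a, \<lambda>w. x w + c w) \<in> opow e \<and> (\<lambda>w. x w + c w) \<noteq> a"
    if x: "x \<in> opow_carrier e" for x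
  proof -
    let ?y = "\<lambda>w. x w + c w" let ?D = "{w. a w \<noteq> ?y w}"
    have y: "?y \<in> opow_carrier e" using opow_carrier_add[OF x c] .
    have "?D \<subseteq> {w. a w \<noteq> 0} \<union> {w. ?y w \<noteq> 0}" by auto
    then have "finite ?D"
      using opow_carrier_finite_support[OF aC] opow_carrier_finite_support[OF y] finite_subset by blast
    moreover have "?D \<subseteq> Field e" using opow_carrier_zero[OF aC] opow_carrier_zero[OF y] by fastforce
    moreover have mD: "m \<in> ?D" unfolding c_def by simp
    ultimately obtain z where z: "z \<in> ?D" "\<forall>w\<in>?D. (w, z) \<in> e"
      using well_order_finite_has_greatest[OF e] by blast
    have "a z < ?y z"
    proof (cases "z = m")
      case True
      then show ?thesis unfolding c_def by simp
    next
      case False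
      then have "a z = 0" using m(2) z mD by blast
      then show ?thesis using z(1) by simp
    qed
    then show ?thesis using aC y z(2) mD unfolding opow_iff by auto
  qed
  have "(\<lambda>x w. x w + c w) ` Field (opow e) \<subseteq> {z. (a, z) \<in> opow e \<and> z \<noteq> a}"
    using above unfolding Field_opow by auto
  then have "strict_mono_rel (opow e) (Restr (opow e) {z. (a, z) \<in> opow e \<and> z \<noteq> a}) (\<lambda>x w. x w + c w)"
    by (rule strict_mono_rel_Restr_target[OF wo opow_translation_strict_mono[OF c]])
  then show ?thesis using strict_mono_rel_ordLeq[OF wo Well_order_Restr[OF wo]] by blast
qed

lemma opow_transport_strict_mono:
  assumes e': "Well_order e'" and j: "strict_mono_rel e e' j" and inj: "inj_on j (Field e)"
  shows "strict_mono_rel (opow e) (opow e')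
           (\<lambda>x w. if w \<in> j ` Field e then x (inv_into (Field e) j w) else 0)"
    (is "strict_mono_rel _ _ ?\<psi>")
proof -
  have jF: "j v \<in> Field e'" if "v \<in> Field e" for v using j that unfolding strict_mono_rel_def by blast
  have \<psi>j: "?\<psi> x (j v) = x v" if "v \<in> Field e" for x v using that inj by simp
  have \<psi>C: "?\<psi> x \<in> opow_carrier e'" if x: "x \<in> opow_carrier e" for x
  proof -
    have "{w. ?\<psi> x w \<noteq> 0} \<subseteq> j ` {w. x w \<noteq> 0}" using inj by (auto split: if_splits)
    then have "finite {w. ?\<psi> x w \<noteq> 0}" using opow_carrier_finite_support[OF x] finite_subset by blast
    moreover have "\<forall>w. w \<notin> Field e' \<longrightarrow> ?\<psi> x w = 0" using jF by auto
    ultimately show ?thesis unfolding opow_carrier_def by blast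
  qed
  show ?thesis
    unfolding strict_mono_rel_def Field_opow
  proof (intro conjI allI impI ballI)
    fix x assume "x \<in> opow_carrier e"
    then show "?\<psi> x \<in> opow_carrier e'" by (rule \<psi>C)
  next
    fix x y assume xy: "(x, y) \<in> opow e" "x \<noteq> y"
    have xC: "x \<in> opow_carrier e" "y \<in> opow_carrier e" using xy(1) unfolding opow_iff by blast+
    obtain z where z: "x z < y z" "\<forall>w. x w \<noteq> y w \<longrightarrow> (w, z) \<in> e" using xy unfolding opow_iff by blast
    have zF: "z \<in> Field e" using z(1) opow_carrier_zero[OF xC(2)] by (metis not_less0)
    have lt: "?\<psi> x (j z) < ?\<psi> y (j z)" unfolding \<psi>j[OF zF] by (rule z(1))
    have "(w, j z) \<in> e'" if w: "?\<psi> x w \<noteq> ?\<psi> y w" for w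
    proof -
      obtain v where v: "v \<in> Field e" "w = j v" using w by (auto split: if_splits)
      then have "(v, z) \<in> e" using w z(2) unfolding v(2) \<psi>j[OF v(1)] by blast
      then show ?thesis
        using j v jF zF well_order_refl[OF e'] unfolding strict_mono_rel_def by (cases "v = z") auto
    qed
    then have "\<exists>z'. ?\<psi> x z' < ?\<psi> y z' \<and> (\<forall>w. ?\<psi> x w \<noteq> ?\<psi> y w \<longrightarrow> (w, z') \<in> e')"
      using lt by (intro exI[of _ "j z"]) blast
    then show "(?\<psi> x, ?\<psi> y) \<in> opow e'"
      unfolding opow_iff using \<psi>C[OF xC(1)] \<psi>C[OF xC(2)] by (intro conjI disjI2)
    show "?\<psi> x \<noteq> ?\<psi> y"
    proof
      assume "?\<psi> x = ?\<psi> y"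
      then have "?\<psi> x (j z) = ?\<psi> y (j z)" by (rule fun_cong)
      with lt show False by linarith
    qed
  qed
qed

lemma opow_mono_ordLeq:
  assumes e: "Well_order e" and e': "Well_order e'" and le: "e \<le>o e'"
    and wo: "Well_order (opow e)" and wo': "Well_order (opow e')"
  shows "opow e \<le>o opow e'"
proof -
  obtain j where j: "strict_mono_rel e e' j" using ordLeq_strict_mono_rel[OF le] by blast
  show ?thesis
    using strict_mono_rel_ordLeq[OF wo wo' opow_transport_strict_mono[OF e' j strict_mono_rel_inj_on[OF e j]]] .
qed

lemma osum_iff: "((i, x), (j, y)) \<in> osum k B \<longleftrightarrow> i \<in> Field k \<and> j \<in> Field k \<and> x \<in> Field (B i) \<and>
   y \<in> Field (B j) \<and> ((i \<noteq> j \<and> (i, j) \<in> k) \<or> (i = j \<and> (x, y) \<in> B i))"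
  unfolding osum_def by (simp only: mem_Collect_eq prod.case)

lemma Field_osum:
  assumes "\<forall>i\<in>Field k. Well_order (B i)"
  shows "Field (osum k B) = Sigma (Field k) (\<lambda>i. Field (B i))"
proof
  show "Field (osum k B) \<subseteq> Sigma (Field k) (\<lambda>i. Field (B i))"
    unfolding Field_def osum_def by auto
  show "Sigma (Field k) (\<lambda>i. Field (B i)) \<subseteq> Field (osum k B)"
  proof clarify
    fix i x assume i: "i \<in> Field k" and x: "x \<in> Field (B i)"
    then have "((i, x), (i, x)) \<in> osum k B"
      using well_order_refl[OF bspec[OF assms i] x] by (simp add: osum_iff)
    then show "(i, x) \<in> Field (osum k B)" by (rule FieldI1)
  qed
qed

lemma Well_order_osum_summand:
  assumes wo: "Well_order (osum k B)" and i: "i \<in> Field k"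
  shows "Well_order (B i)"
proof -
  let ?R = "Restr (osum k B) ({i} \<times> UNIV)"
  have "inj_on snd (Field ?R)"
  proof (rule inj_onI)
    fix p q assume "p \<in> Field ?R" "q \<in> Field ?R" "snd p = snd q"
    moreover have "Field ?R \<subseteq> {i} \<times> UNIV" by (rule Field_Restr_subset)
    ultimately show "p = q" by (cases p, cases q) auto
  qed
  moreover have "dir_image ?R snd = B i"
  proof
    show "dir_image ?R snd \<subseteq> B i" unfolding dir_image_def by (auto simp: osum_iff)
    show "B i \<subseteq> dir_image ?R snd"
    proof
      fix p assume p: "p \<in> B i"
      obtain x y where xy: "p = (x, y)" by (cases p)
      then have "((i, x), (i, y)) \<in> ?R" using i p by (auto simp: osum_iff intro: FieldI1 FieldI2)
      then show "p \<in> dir_image ?R snd" unfolding dir_image_def using xy by force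
    qed
  qed
  ultimately show ?thesis using Well_order_dir_image[OF Well_order_Restr[OF wo]] by metis
qed

lemma strict_mono_rel_osum:
  assumes B': "\<forall>i\<in>Field k'. Well_order (B' i)" and u: "strict_mono_rel k k' u"
    and \<phi>: "\<forall>i\<in>Field k. strict_mono_rel (B i) (B' (u i)) (\<phi> i)"
  shows "strict_mono_rel (osum k B) (osum k' B') (\<lambda>(i, x). (u i, \<phi> i x))"
  unfolding strict_mono_rel_def
proof (intro conjI allI impI ballI)
  fix p assume "p \<in> Field (osum k B)"
  then obtain i x where p: "p = (i, x)" "i \<in> Field k" "x \<in> Field (B i)"
    unfolding Field_def osum_def by auto
  then have "u i \<in> Field k'" "\<phi> i x \<in> Field (B' (u i))" using u \<phi> unfolding strict_mono_rel_def by auto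
  then show "(\<lambda>(i, x). (u i, \<phi> i x)) p \<in> Field (osum k' B')" using Field_osum[OF B'] p by simp
next
  fix p q assume pq: "(p, q) \<in> osum k B" "p \<noteq> q"
  obtain i x j y where ij: "p = (i, x)" "q = (j, y)" by (cases p, cases q)
  have F: "u i \<in> Field k'" "u j \<in> Field k'" "\<phi> i x \<in> Field (B' (u i))" "\<phi> j y \<in> Field (B' (u j))"
    using pq ij u \<phi> unfolding strict_mono_rel_def by (auto simp: osum_iff)
  have "((u i, \<phi> i x), (u j, \<phi> j y)) \<in> osum k' B' \<and> (u i, \<phi> i x) \<noteq> (u j, \<phi> j y)"
  proof (cases "i = j")
    case True
    then have "(\<phi> i x, \<phi> i y) \<in> B' (u i) \<and> \<phi> i x \<noteq> \<phi> i y"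
      using pq ij \<phi> unfolding strict_mono_rel_def by (auto simp: osum_iff)
    then show ?thesis using F True by (simp add: osum_iff)
  next
    case False
    then have "(u i, u j) \<in> k' \<and> u i \<noteq> u j" using pq ij u unfolding strict_mono_rel_def by (auto simp: osum_iff)
    then show ?thesis using F by (simp add: osum_iff)
  qed
  then show "((\<lambda>(i, x). (u i, \<phi> i x)) p, (\<lambda>(i, x). (u i, \<phi> i x)) q) \<in> osum k' B'"
    "(\<lambda>(i, x). (u i, \<phi> i x)) p \<noteq> (\<lambda>(i, x). (u i, \<phi> i x)) q" using ij by simp_all
qed

section \<open>Sums of blocks and their copies\<close>

lemma monotone_eventually_constant:
  assumes r: "Well_order r" and s: "Well_order s" and cof: "cof_ge r k"
    and f: "\<forall>x\<in>Field r. f x \<in> Field s" and mono: "\<forall>x y. (x, y) \<in> r \<longrightarrow> (f x, f y) \<in> s"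
    and small: "small k (f ` Field r)"
  shows "\<exists>x0\<in>Field r. \<forall>x. (x0, x) \<in> r \<longrightarrow> f x = f x0"
proof (cases "\<exists>x0\<in>Field r. \<forall>x\<in>Field r. (f x, f x0) \<in> s")
  case True
  then obtain x0 where x0: "x0 \<in> Field r" "\<forall>x\<in>Field r. (f x, f x0) \<in> s" by blast
  have "f x = f x0" if "(x0, x) \<in> r" for x
    using that mono x0(2) well_order_antisym[OF s] by (blast intro: FieldI2)
  then show ?thesis using x0(1) by blast
next
  case False
  define t where "t \<beta> = (SOME x. x \<in> Field r \<and> f x = \<beta>)" for \<beta>
  have t: "t (f x) \<in> Field r \<and> f (t (f x)) = f x" if "x \<in> Field r" for x
  proof -
    have "\<exists>y. y \<in> Field r \<and> f y = f x" using that by blast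
    then show ?thesis unfolding t_def by (rule someI_ex)
  qed
  have "cofinal r (t ` f ` Field r)"
    unfolding cofinal_def
  proof (intro conjI ballI)
    show "t ` f ` Field r \<subseteq> Field r" using t by blast
  next
    fix x assume x: "x \<in> Field r"
    then obtain x' where x': "x' \<in> Field r" "(f x', f x) \<notin> s" using False by blast
    have "(x, t (f x')) \<in> r"
    proof (rule ccontr)
      assume "(x, t (f x')) \<notin> r"
      then have "(t (f x'), x) \<in> r" using well_order_not_le[OF r x] t[OF x'(1)] by blast
      then show False using mono t[OF x'(1)] x'(2) by metis
    qed
    then show "\<exists>b\<in>t ` f ` Field r. (x, b) \<in> r" using x' by blast
  qed
  then show ?thesis using cofinal_not_small[OF cof] small_image[OF small] by blast
qed

locale block_sum =
  fixes W :: "'w rel" and k :: "'k rel" and B :: "'k \<Rightarrow> 'x rel" and h :: "'w \<Rightarrow> 'k \<times> 'x"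
  assumes k_card: "Card_order k" and k_inf: "infinite (Field k)"
    and W_wo: "Well_order W"
    and h_iso: "iso W (osum k B) h"
    and B_wo: "\<forall>\<xi>\<in>Field k. Well_order (B \<xi>)"
    and W_cof: "cof_ge W k"
    and B_cof: "\<forall>\<xi>\<in>Field k. cof_ge (B \<xi>) k"
    and B_mono: "\<forall>\<xi>\<in>Field k. \<forall>\<zeta>\<in>Field k. \<xi> \<noteq> \<zeta> \<and> (\<xi>, \<zeta>) \<in> k \<longrightarrow> B \<xi> \<le>o B \<zeta>"
    and B_above: "\<forall>\<xi>\<in>Field k. \<forall>y\<in>Field (B \<xi>). B \<xi> \<le>o Restr (B \<xi>) {z. (y, z) \<in> B \<xi> \<and> z \<noteq> y}"
begin

definition block :: "'w \<Rightarrow> 'k" where "block w = fst (h w)"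
definition position :: "'w \<Rightarrow> 'x" where "position w = snd (h w)"
definition point :: "'k \<Rightarrow> 'x \<Rightarrow> 'w" where "point \<xi> y = inv_into (Field W) h (\<xi>, y)"
definition copies :: "'w set set" where "copies = {A. A \<subseteq> Field W \<and> Restr W A =o W}"
definition blocks :: "'k set \<Rightarrow> 'w set" where "blocks X = {w \<in> Field W. block w \<in> X}"

lemma k_wo: "Well_order k"
  using k_card card_order_on_well_order_on by blast

lemma k_no_greatest: "\<xi> \<in> Field k \<Longrightarrow> \<exists>\<zeta>\<in>Field k. \<xi> \<noteq> \<zeta> \<and> (\<xi>, \<zeta>) \<in> k"
  using infinite_Card_order_limit[OF k_card k_inf] by blast

lemma h_image: "h ` Field W = Sigma (Field k) (\<lambda>\<xi>. Field (B \<xi>))"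
  using iso_Field[OF h_iso] Field_osum[OF B_wo] by simp

lemma h_eq: "h w = (block w, position w)"
  unfolding block_def position_def by simp

lemma block_position_in_Field: "w \<in> Field W \<Longrightarrow> block w \<in> Field k \<and> position w \<in> Field (B (block w))"
  using imageI[of w "Field W" h] unfolding h_image block_def position_def by (cases "h w") auto

lemma point_in_Field:
  assumes "\<xi> \<in> Field k" "y \<in> Field (B \<xi>)"
  shows "point \<xi> y \<in> Field W \<and> block (point \<xi> y) = \<xi> \<and> position (point \<xi> y) = y"
proof -
  have "(\<xi>, y) \<in> h ` Field W" using assms by (simp only: h_image) blast
  then show ?thesis
    unfolding point_def block_def position_def by (simp add: f_inv_into_f inv_into_into)
qed

lemma point_block_position: "w \<in> Field W \<Longrightarrow> point (block w) (position w) = w"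
  unfolding point_def using h_eq iso_imp_inj_on[OF h_iso] by (metis inv_into_f_f)

lemma h_le_iff: "w \<in> Field W \<Longrightarrow> w' \<in> Field W \<Longrightarrow> (w, w') \<in> W \<longleftrightarrow> (h w, h w') \<in> osum k B"
  using h_iso unfolding iso_iff2 by blast

lemma le_if_block_less:
  "w \<in> Field W \<Longrightarrow> w' \<in> Field W \<Longrightarrow> (block w, block w') \<in> k \<Longrightarrow> block w \<noteq> block w' \<Longrightarrow>
    (w, w') \<in> W \<and> w \<noteq> w'"
  using h_le_iff block_position_in_Field by (auto simp: h_eq osum_iff)

lemma block_mono:
  assumes "(w, w') \<in> W"
  shows "(block w, block w') \<in> k"
proof -
  have F: "w \<in> Field W" "w' \<in> Field W" using assms by (auto intro: FieldI1 FieldI2)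
  then show ?thesis using h_le_iff[OF F] assms block_position_in_Field[OF F(1)] well_order_refl[OF k_wo]
    by (auto simp: h_eq osum_iff)
qed

lemma le_iff_position_le:
  "w \<in> Field W \<Longrightarrow> w' \<in> Field W \<Longrightarrow> block w = block w' \<Longrightarrow>
    (w, w') \<in> W \<longleftrightarrow> (position w, position w') \<in> B (block w)"
  using h_le_iff block_position_in_Field by (auto simp: h_eq osum_iff)

lemma point_mono: "\<xi> \<in> Field k \<Longrightarrow> (y, y') \<in> B \<xi> \<Longrightarrow> (point \<xi> y, point \<xi> y') \<in> W"
  using le_iff_position_le point_in_Field by (metis FieldI1 FieldI2)

lemma B_nonempty: "\<xi> \<in> Field k \<Longrightarrow> Field (B \<xi>) \<noteq> {}"
  using B_cof cofinal_not_small[of "B \<xi>" k "{}"] small_finite[OF k_card k_inf, of "{}"]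
  unfolding cofinal_def by auto

lemma block_nonempty: "\<xi> \<in> Field k \<Longrightarrow> \<exists>w\<in>Field W. block w = \<xi>"
  using B_nonempty point_in_Field by blast

lemma unbounded_not_small:
  assumes R: "R \<subseteq> Field k" and unb: "\<forall>\<beta>\<in>Field k. \<exists>\<eta>\<in>R. (\<beta>, \<eta>) \<in> k \<and> \<beta> \<noteq> \<eta>"
  shows "\<not> small k R"
proof -
  define a where "a \<eta> = (SOME w. w \<in> Field W \<and> block w = \<eta>)" for \<eta>
  have a: "a \<eta> \<in> Field W \<and> block (a \<eta>) = \<eta>" if "\<eta> \<in> R" for \<eta>
    unfolding a_def using block_nonempty R that by (metis (mono_tags, lifting) someI_ex subsetD)
  have "cofinal W (a ` R)"
    unfolding cofinal_def
  proof (intro conjI ballI)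
    show "a ` R \<subseteq> Field W" using a by auto
  next
    fix w assume w: "w \<in> Field W"
    obtain \<eta> where "\<eta> \<in> R" "(block w, \<eta>) \<in> k" "block w \<noteq> \<eta>"
      using unb block_position_in_Field[OF w] by blast
    then have "(w, a \<eta>) \<in> W" using le_if_block_less[OF w] a by metis
    then show "\<exists>b\<in>a ` R. (w, b) \<in> W" using \<open>\<eta> \<in> R\<close> by blast
  qed
  then show ?thesis using cofinal_not_small[OF W_cof] small_image by blast
qed

lemma copy_reaches_later_blocks:
  assumes A: "A \<in> copies" and \<beta>: "\<beta> \<in> Field k"
  shows "\<exists>a\<in>A. (\<beta>, block a) \<in> k \<and> \<beta> \<noteq> block a"
proof -
  obtain \<zeta> where \<zeta>: "\<zeta> \<in> Field k" "\<beta> \<noteq> \<zeta>" "(\<beta>, \<zeta>) \<in> k" using k_no_greatest \<beta> by blast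
  obtain p where p: "p \<in> Field W" "block p = \<zeta>" using block_nonempty \<zeta>(1) by blast
  obtain a where a: "a \<in> A" "(p, a) \<in> W"
    using ordIso_Restr_unbounded[OF W_wo _ _ p(1)] A unfolding copies_def by blast
  have "(\<zeta>, block a) \<in> k" using block_mono[OF a(2)] p(2) by simp
  then show ?thesis using a(1) \<zeta> well_order_trans[OF k_wo] well_order_antisym[OF k_wo] by blast
qed

lemma copy_blocks_not_small:
  assumes A: "A \<in> copies"
  shows "\<not> small k (block ` A)"
proof (rule unbounded_not_small)
  show "block ` A \<subseteq> Field k" using A block_position_in_Field unfolding copies_def by blast
  show "\<forall>\<beta>\<in>Field k. \<exists>\<eta>\<in>block ` A. (\<beta>, \<eta>) \<in> k \<and> \<beta> \<noteq> \<eta>"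
    using copy_reaches_later_blocks[OF A] by blast
qed

lemma copies_superset: "s \<in> copies \<Longrightarrow> s \<subseteq> A \<Longrightarrow> A \<subseteq> Field W \<Longrightarrow> A \<in> copies"
  unfolding copies_def
  using Restr_mono_ordLeq[OF W_wo] Restr_ordLeq[OF W_wo] ordIso_iff_ordLeq ordIso_ordLeq_trans ordIso_symmetric
  by (metis (no_types, lifting) mem_Collect_eq)

lemma image_copies: "strict_mono_rel W W f \<Longrightarrow> f ` Field W \<in> copies"
  unfolding copies_def using strict_mono_rel_image_ordIso[OF W_wo] strict_mono_rel_def by blast

lemma block_embeds_above:
  assumes u: "strict_mono_rel k k u" and \<alpha>: "\<alpha> \<in> Field k" and y: "y \<in> Field (B (u \<alpha>))"
  shows "B \<alpha> \<le>o Restr (B (u \<alpha>)) {z. (y, z) \<in> B (u \<alpha>) \<and> z \<noteq> y}"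
proof -
  have u\<alpha>: "u \<alpha> \<in> Field k" using u \<alpha> unfolding strict_mono_rel_def by blast
  have "B \<alpha> \<le>o B (u \<alpha>)"
  proof (cases "\<alpha> = u \<alpha>")
    case True
    then show ?thesis using ordLeq_reflexive[OF bspec[OF B_wo \<alpha>]] by simp
  next
    case False
    then show ?thesis using B_mono \<alpha> u\<alpha> strict_mono_rel_inflationary[OF k_wo u \<alpha>] by blast
  qed
  also have "B (u \<alpha>) \<le>o Restr (B (u \<alpha>)) {z. (y, z) \<in> B (u \<alpha>) \<and> z \<noteq> y}"
    using B_above u\<alpha> y by blast
  finally show ?thesis .
qed

lemma tail_embedding:
  assumes u: "strict_mono_rel k k u" and p: "\<forall>\<alpha>\<in>Field k. p \<alpha> \<in> Field (B (u \<alpha>))"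
  shows "\<exists>\<Psi>. strict_mono_rel W W \<Psi> \<and>
    (\<forall>x\<in>Field W. block (\<Psi> x) = u (block x) \<and> (p (block x), position (\<Psi> x)) \<in> B (u (block x)))"
proof -
  let ?T = "\<lambda>\<alpha>. {z. (p \<alpha>, z) \<in> B (u \<alpha>) \<and> z \<noteq> p \<alpha>}"
  have uF: "u \<alpha> \<in> Field k" if "\<alpha> \<in> Field k" for \<alpha> using u that unfolding strict_mono_rel_def by blast
  have "\<forall>\<alpha>\<in>Field k. \<exists>f. strict_mono_rel (B \<alpha>) (Restr (B (u \<alpha>)) (?T \<alpha>)) f"
  proof
    fix \<alpha> assume \<alpha>: "\<alpha> \<in> Field k"
    show "\<exists>f. strict_mono_rel (B \<alpha>) (Restr (B (u \<alpha>)) (?T \<alpha>)) f"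
      by (rule ordLeq_strict_mono_rel[OF block_embeds_above[OF u \<alpha> bspec[OF p \<alpha>]]])
  qed
  then obtain \<phi> where "\<forall>\<alpha>\<in>Field k. strict_mono_rel (B \<alpha>) (Restr (B (u \<alpha>)) (?T \<alpha>)) (\<phi> \<alpha>)"
    by (auto dest!: bchoice)
  then have \<phi>: "strict_mono_rel (B \<alpha>) (B (u \<alpha>)) (\<phi> \<alpha>)" "\<phi> \<alpha> ` Field (B \<alpha>) \<subseteq> ?T \<alpha>"
    if "\<alpha> \<in> Field k" for \<alpha>
    using strict_mono_rel_into_Restr that by blast+
  let ?\<sigma> = "\<lambda>(\<alpha>, y). (u \<alpha>, \<phi> \<alpha> y)"
  define \<Psi> where "\<Psi> = inv_into (Field W) h \<circ> ?\<sigma> \<circ> h"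
  have "\<forall>\<alpha>\<in>Field k. strict_mono_rel (B \<alpha>) (B (u \<alpha>)) (\<phi> \<alpha>)" using \<phi>(1) by blast
  then have "strict_mono_rel (osum k B) W (inv_into (Field W) h \<circ> ?\<sigma>)"
    by (rule strict_mono_rel_comp[OF strict_mono_rel_osum[OF B_wo u] iso_inv_strict_mono_rel[OF h_iso]])
  then have "strict_mono_rel W W \<Psi>"
    unfolding \<Psi>_def by (rule strict_mono_rel_comp[OF iso_strict_mono_rel[OF h_iso]])
  moreover have "block (\<Psi> x) = u (block x) \<and> (p (block x), position (\<Psi> x)) \<in> B (u (block x))"
    if x: "x \<in> Field W" for x
  proof -
    let ?\<alpha> = "block x" and ?y = "position x"
    have \<alpha>: "?\<alpha> \<in> Field k" "?y \<in> Field (B ?\<alpha>)" using block_position_in_Field[OF x] by blast+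
    have "\<phi> ?\<alpha> ?y \<in> ?T ?\<alpha>" using \<phi>(2)[OF \<alpha>(1)] \<alpha>(2) by blast
    moreover have "\<Psi> x = point (u ?\<alpha>) (\<phi> ?\<alpha> ?y)" unfolding \<Psi>_def point_def by (simp add: h_eq)
    moreover have "\<phi> ?\<alpha> ?y \<in> Field (B (u ?\<alpha>))" using \<phi>(1)[OF \<alpha>(1)] \<alpha>(2) unfolding strict_mono_rel_def by blast
    ultimately show ?thesis using point_in_Field[OF uF[OF \<alpha>(1)]] by simp
  qed
  ultimately show ?thesis by blast
qed

lemma blocks_in_copies:
  assumes X: "X \<subseteq> Field k" "\<not> small k X"
  shows "blocks X \<in> copies"
proof -
  obtain e where "strict_mono_rel k (Restr k X) e"
    using ordLeq_strict_mono_rel not_small_Restr_ordLeq[OF k_card k_inf X] by blast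
  then have e: "strict_mono_rel k k e" "e ` Field k \<subseteq> X" using strict_mono_rel_into_Restr by blast+
  define p where "p \<alpha> = (SOME y. y \<in> Field (B (e \<alpha>)))" for \<alpha>
  have "p \<alpha> \<in> Field (B (e \<alpha>))" if "\<alpha> \<in> Field k" for \<alpha>
    using B_nonempty e(1) that unfolding p_def strict_mono_rel_def by (metis all_not_in_conv someI_ex)
  then obtain \<Psi> where \<Psi>: "strict_mono_rel W W \<Psi>" "\<forall>x\<in>Field W. block (\<Psi> x) = e (block x)"
    using tail_embedding[OF e(1)] by blast
  have "\<Psi> ` Field W \<subseteq> blocks X"
    using \<Psi> e(2) block_position_in_Field unfolding blocks_def strict_mono_rel_def by auto
  then show ?thesis using copies_superset[OF image_copies[OF \<Psi>(1)]] unfolding blocks_def by blast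
qed

end

locale block_sum_copy = block_sum W k B h
  for W :: "'w rel" and k :: "'k rel" and B :: "'k \<Rightarrow> 'x rel" and h :: "'w \<Rightarrow> 'k \<times> 'x" +
  fixes A :: "'w set" and g :: "'w \<Rightarrow> 'w"
  assumes A_copy: "A \<in> copies" and g_iso: "iso W (Restr W A) g"
begin

definition copy_block :: "'w \<Rightarrow> 'k" where "copy_block x = block (g x)"

lemma g_image: "g ` Field W = A"
  using iso_Field[OF g_iso] Refl_Field_Restr[of W A] W_wo A_copy
  unfolding copies_def order_on_defs by blast

lemma copy_block_in_Field: "x \<in> Field W \<Longrightarrow> copy_block x \<in> Field k"
  unfolding copy_block_def using g_image A_copy block_position_in_Field unfolding copies_def by blast

lemma copy_block_mono: "(x, y) \<in> W \<Longrightarrow> (copy_block x, copy_block y) \<in> k"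
  unfolding copy_block_def using iso_forward[OF _ g_iso] block_mono by blast

lemma copy_block_eventually_constant:
  assumes \<xi>: "\<xi> \<in> Field k"
  shows "\<exists>y0\<in>Field (B \<xi>). \<forall>y. (y0, y) \<in> B \<xi> \<longrightarrow>
           copy_block (point \<xi> y) = copy_block (point \<xi> y0)"
proof -
  let ?f = "\<lambda>y. copy_block (point \<xi> y)"
  obtain \<zeta> where \<zeta>: "\<zeta> \<in> Field k" "\<xi> \<noteq> \<zeta>" "(\<xi>, \<zeta>) \<in> k" using k_no_greatest \<xi> by blast
  obtain w where w: "w \<in> Field W" "block w = \<zeta>" using block_nonempty \<zeta>(1) by blast
  have "(?f y, copy_block w) \<in> k" if "y \<in> Field (B \<xi>)" for y
    using le_if_block_less[of "point \<xi> y" w] point_in_Field[OF \<xi> that] w \<zeta> copy_block_mono by auto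
  then have "?f ` Field (B \<xi>) \<subseteq> under k (copy_block w)" unfolding under_def by blast
  then have "small k (?f ` Field (B \<xi>))"
    using small_subset small_under[OF k_card k_inf copy_block_in_Field[OF w(1)]] by blast
  moreover have "\<forall>y\<in>Field (B \<xi>). ?f y \<in> Field k"
    using point_in_Field[OF \<xi>] copy_block_in_Field by blast
  moreover have "\<forall>y y'. (y, y') \<in> B \<xi> \<longrightarrow> (?f y, ?f y') \<in> k"
    using point_mono[OF \<xi>] copy_block_mono by blast
  ultimately show ?thesis
    using monotone_eventually_constant[OF bspec[OF B_wo \<xi>] k_wo bspec[OF B_cof \<xi>], where f = ?f]
    by blast
qed

definition stable_position :: "'k \<Rightarrow> 'x" where
  "stable_position \<xi> = (SOME y0. y0 \<in> Field (B \<xi>) \<and>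
     (\<forall>y. (y0, y) \<in> B \<xi> \<longrightarrow> copy_block (point \<xi> y) = copy_block (point \<xi> y0)))"

definition stable_block :: "'k \<Rightarrow> 'k" where
  "stable_block \<xi> = copy_block (point \<xi> (stable_position \<xi>))"

lemma stable_position:
  "\<xi> \<in> Field k \<Longrightarrow> stable_position \<xi> \<in> Field (B \<xi>) \<and>
     (\<forall>y. (stable_position \<xi>, y) \<in> B \<xi> \<longrightarrow> copy_block (point \<xi> y) = stable_block \<xi>)"
  unfolding stable_block_def stable_position_def
  using someI_ex[OF copy_block_eventually_constant[unfolded Bex_def]] by blast

lemma stable_block_in_Field: "\<xi> \<in> Field k \<Longrightarrow> stable_block \<xi> \<in> Field k"
  unfolding stable_block_def using stable_position point_in_Field copy_block_in_Field by blast

lemma stable_block_mono: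
  assumes "\<xi> \<in> Field k" "\<zeta> \<in> Field k" "(\<xi>, \<zeta>) \<in> k"
  shows "(stable_block \<xi>, stable_block \<zeta>) \<in> k"
proof (cases "\<xi> = \<zeta>")
  case True
  then show ?thesis using stable_block_in_Field assms well_order_refl[OF k_wo] by simp
next
  case False
  then have "(point \<xi> (stable_position \<xi>), point \<zeta> (stable_position \<zeta>)) \<in> W"
    using le_if_block_less point_in_Field stable_position assms by metis
  then show ?thesis unfolding stable_block_def by (rule copy_block_mono)
qed

lemma copy_block_le_stable_block:
  assumes x: "x \<in> Field W"
  shows "(copy_block x, stable_block (block x)) \<in> k"
proof -
  let ?\<xi> = "block x" and ?s = "stable_position (block x)"
  have \<xi>: "?\<xi> \<in> Field k" "position x \<in> Field (B ?\<xi>)" using block_position_in_Field[OF x] by blast+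
  note s = stable_position[OF \<xi>(1)]
  show ?thesis
  proof (cases "(?s, position x) \<in> B ?\<xi>")
    case True
    then show ?thesis
      using s point_block_position[OF x] well_order_refl[OF k_wo] stable_block_in_Field[OF \<xi>(1)] by metis
  next
    case False
    then have "(position x, ?s) \<in> B ?\<xi>" using well_order_not_le[OF bspec[OF B_wo \<xi>(1)]] s \<xi> by blast
    then have "(x, point ?\<xi> ?s) \<in> W" using point_mono[OF \<xi>(1)] point_block_position[OF x] by metis
    then show ?thesis unfolding stable_block_def by (rule copy_block_mono)
  qed
qed

lemma stable_blocks_not_small: "\<not> small k (stable_block ` Field k)"
proof (rule unbounded_not_small)
  show "stable_block ` Field k \<subseteq> Field k" using stable_block_in_Field by blast
  show "\<forall>\<beta>\<in>Field k. \<exists>\<eta>\<in>stable_block ` Field k. (\<beta>, \<eta>) \<in> k \<and> \<beta> \<noteq> \<eta>"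
  proof
    fix \<beta> assume \<beta>: "\<beta> \<in> Field k"
    obtain a where a: "a \<in> A" "(\<beta>, block a) \<in> k" "\<beta> \<noteq> block a"
      using copy_reaches_later_blocks[OF A_copy \<beta>] by blast
    obtain x where x: "x \<in> Field W" "g x = a" using g_image a(1) by blast
    have "(block a, stable_block (block x)) \<in> k"
      using copy_block_le_stable_block[OF x(1)] x(2) unfolding copy_block_def by simp
    then have "(\<beta>, stable_block (block x)) \<in> k \<and> \<beta> \<noteq> stable_block (block x)"
      using a well_order_trans[OF k_wo] well_order_antisym[OF k_wo] by blast
    then show "\<exists>\<eta>\<in>stable_block ` Field k. (\<beta>, \<eta>) \<in> k \<and> \<beta> \<noteq> \<eta>"
      using block_position_in_Field[OF x(1)] by blast
  qed
qed

lemma stable_blocks_subset: "stable_block ` Field k \<subseteq> block ` A"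
  unfolding stable_block_def copy_block_def using stable_position point_in_Field g_image by blast

lemma stable_block_reindex:
  assumes Z: "Z \<subseteq> stable_block ` Field k" "\<not> small k Z"
  shows "\<exists>u. strict_mono_rel k k u \<and> (\<forall>\<alpha>\<in>Field k. stable_block (u \<alpha>) \<in> Z)"
proof -
  obtain e where "strict_mono_rel k (Restr k Z) e"
    using ordLeq_strict_mono_rel not_small_Restr_ordLeq[OF k_card k_inf _ Z(2)] Z(1)
      stable_block_in_Field by blast
  then have e: "strict_mono_rel k k e" "e ` Field k \<subseteq> Z" using strict_mono_rel_into_Restr by blast+
  define u where "u \<alpha> = (SOME \<xi>. \<xi> \<in> Field k \<and> stable_block \<xi> = e \<alpha>)" for \<alpha>
  have u: "u \<alpha> \<in> Field k \<and> stable_block (u \<alpha>) = e \<alpha>" if "\<alpha> \<in> Field k" for \<alpha>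
  proof -
    have "e \<alpha> \<in> stable_block ` Field k" using subsetD[OF Z(1) subsetD[OF e(2) imageI[OF that]]] .
    then have "\<exists>\<xi>. \<xi> \<in> Field k \<and> stable_block \<xi> = e \<alpha>" by (metis imageE)
    then show ?thesis unfolding u_def by (rule someI_ex)
  qed
  have "strict_mono_rel k k u"
    unfolding strict_mono_rel_def
  proof (intro conjI allI impI ballI)
    fix \<alpha> assume "\<alpha> \<in> Field k"
    then show "u \<alpha> \<in> Field k" using u by blast
  next
    fix \<alpha> \<alpha>' assume \<alpha>: "(\<alpha>, \<alpha>') \<in> k" "\<alpha> \<noteq> \<alpha>'"
    have F: "\<alpha> \<in> Field k" "\<alpha>' \<in> Field k" using \<alpha>(1) by (auto intro: FieldI1 FieldI2)
    have "(e \<alpha>, e \<alpha>') \<in> k" "e \<alpha> \<noteq> e \<alpha>'" using e(1) \<alpha> unfolding strict_mono_rel_def by blast+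
    then have "(u \<alpha>', u \<alpha>) \<notin> k"
      using stable_block_mono u F well_order_antisym[OF k_wo] by metis
    then show "(u \<alpha>, u \<alpha>') \<in> k" "u \<alpha> \<noteq> u \<alpha>'" using well_order_not_le[OF k_wo] u F by blast+
  qed
  then show ?thesis using u e(2) by auto
qed

text \<open>Above the stable position of each block the copy \<open>A\<close> lies in a fixed block, so
  re-embedding \<open>W\<close> into those tails and then into \<open>A\<close> via \<open>g\<close> controls which blocks the
  resulting copy meets.\<close>
lemma copy_inside_blocks:
  assumes Y: "\<not> small k (Y \<inter> stable_block ` Field k)"
  shows "\<exists>s\<in>copies. s \<subseteq> A \<inter> blocks Y"
proof -
  obtain u where u: "strict_mono_rel k k u" and uY: "\<forall>\<alpha>\<in>Field k. stable_block (u \<alpha>) \<in> Y"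
    using stable_block_reindex[OF _ Y] by blast
  have uF: "u \<alpha> \<in> Field k" if "\<alpha> \<in> Field k" for \<alpha> using u that unfolding strict_mono_rel_def by blast
  obtain \<Psi> where \<Psi>: "strict_mono_rel W W \<Psi>"
    and \<Psi>_pos: "\<forall>x\<in>Field W. block (\<Psi> x) = u (block x) \<and>
       (stable_position (u (block x)), position (\<Psi> x)) \<in> B (u (block x))"
    using tail_embedding[OF u, of "\<lambda>\<alpha>. stable_position (u \<alpha>)"] stable_position uF by blast
  have \<Psi>Y: "block (g (\<Psi> x)) \<in> Y" if x: "x \<in> Field W" for x
  proof -
    have "\<Psi> x \<in> Field W" using \<Psi> x unfolding strict_mono_rel_def by blast
    then have "point (u (block x)) (position (\<Psi> x)) = \<Psi> x" using point_block_position \<Psi>_pos x by metis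
    then have "copy_block (\<Psi> x) = stable_block (u (block x))"
      using stable_position[OF uF] \<Psi>_pos x block_position_in_Field by metis
    then show ?thesis using uY block_position_in_Field[OF x] unfolding copy_block_def by simp
  qed
  have "strict_mono_rel W W g" using strict_mono_rel_into_Restr[OF iso_strict_mono_rel[OF g_iso]] by blast
  then have "(g \<circ> \<Psi>) ` Field W \<in> copies" using image_copies strict_mono_rel_comp[OF \<Psi>] by blast
  moreover have "(g \<circ> \<Psi>) ` Field W \<subseteq> A \<inter> blocks Y"
    using \<Psi> \<Psi>Y g_image A_copy unfolding blocks_def copies_def strict_mono_rel_def by auto
  ultimately show ?thesis by blast
qed

end

context block_sum
begin

lemma copy_dense:
  assumes A: "A \<in> copies"
  shows "\<exists>X. X \<subseteq> block ` A \<and> \<not> small k X \<and>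
    (\<forall>Y. \<not> small k (Y \<inter> X) \<longrightarrow> (\<exists>s\<in>copies. s \<subseteq> A \<inter> blocks Y))"
proof -
  obtain g where "iso W (Restr W A) g"
    using A ordIso_symmetric unfolding copies_def ordIso_def by blast
  then interpret block_sum_copy W k B h A g by unfold_locales (use A in blast)+
  show ?thesis using stable_blocks_subset stable_blocks_not_small copy_inside_blocks by blast
qed

end

context block_sum
begin

lemma sep_le_blocks:
  assumes XY: "small k (X - Y)"
  shows "sep_le copies (\<subseteq>) (blocks X) (blocks Y)"
  unfolding sep_le_def
proof (intro ballI impI)
  fix r assume r: "r \<in> copies" "r \<subseteq> blocks X"
  obtain Z where Z: "Z \<subseteq> block ` r" "\<not> small k Z"
    and dense: "\<forall>Y. \<not> small k (Y \<inter> Z) \<longrightarrow> (\<exists>s\<in>copies. s \<subseteq> r \<inter> blocks Y)"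
    using copy_dense[OF r(1)] by blast
  have Z_sub: "Z \<subseteq> (X - Y) \<union> (Y \<inter> Z)" using Z(1) r(2) unfolding blocks_def by blast
  have "\<not> small k (Y \<inter> Z)"
  proof
    assume "small k (Y \<inter> Z)"
    then have "small k ((X - Y) \<union> (Y \<inter> Z))" using XY by (rule small_Un[OF k_card k_inf, rotated])
    then show False using small_subset[OF Z_sub] Z(2) by blast
  qed
  then obtain s where "s \<in> copies" "s \<subseteq> r \<inter> blocks Y" using dense by blast
  then show "\<exists>s\<in>copies. s \<subseteq> r \<and> s \<subseteq> blocks Y" by blast
qed

lemma compat_blocks_iff:
  assumes "X \<subseteq> Field k"
  shows "compat copies (\<subseteq>) (blocks X) (blocks Y) \<longleftrightarrow> \<not> small k (X \<inter> Y)"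
proof
  assume "compat copies (\<subseteq>) (blocks X) (blocks Y)"
  then obtain s where s: "s \<in> copies" "s \<subseteq> blocks X" "s \<subseteq> blocks Y" unfolding compat_def by blast
  then have "block ` s \<subseteq> X \<inter> Y" unfolding blocks_def by blast
  then show "\<not> small k (X \<inter> Y)" using copy_blocks_not_small[OF s(1)] small_subset by blast
next
  assume "\<not> small k (X \<inter> Y)"
  then have "blocks (X \<inter> Y) \<in> copies" using blocks_in_copies assms by blast
  moreover have "blocks (X \<inter> Y) \<subseteq> blocks X" "blocks (X \<inter> Y) \<subseteq> blocks Y"
    unfolding blocks_def by blast+
  ultimately show "compat copies (\<subseteq>) (blocks X) (blocks Y)" unfolding compat_def by blast
qed

lemma reflp_on_copies: "reflp_on copies (\<subseteq>)"
  by (simp add: reflp_onI)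

lemma transp_on_copies: "transp_on copies (\<subseteq>)"
  by (auto intro: transp_onI)

lemma blocks_in_copies_if_Pk_pre: "X \<in> Pk_pre k \<Longrightarrow> blocks X \<in> copies"
  using blocks_in_copies unfolding Pk_pre_iff by blast

lemma compat_sep_le_blocks_iff:
  assumes XY: "X \<in> Pk_pre k" "Y \<in> Pk_pre k"
  shows "compat copies (sep_le copies (\<subseteq>)) (blocks X) (blocks Y) \<longleftrightarrow> compat (Pk_pre k) (Pk_pre_le k) X Y"
proof -
  have XF: "X \<subseteq> Field k" using XY(1) unfolding Pk_pre_iff by blast
  have "compat copies (sep_le copies (\<subseteq>)) (blocks X) (blocks Y) \<longleftrightarrow> compat copies (\<subseteq>) (blocks X) (blocks Y)"
    by (rule compat_sep_le_iff[OF reflp_on_copies transp_on_copies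
          blocks_in_copies_if_Pk_pre[OF XY(1)] blocks_in_copies_if_Pk_pre[OF XY(2)]])
  also have "\<dots> \<longleftrightarrow> \<not> small k (X \<inter> Y)" by (rule compat_blocks_iff[OF XF])
  also have "\<dots> \<longleftrightarrow> compat (Pk_pre k) (Pk_pre_le k) X Y" by (rule compat_Pk_pre_iff[OF k_card k_inf XY, symmetric])
  finally show ?thesis .
qed

lemma blocks_dense:
  assumes A: "A \<in> copies"
  shows "\<exists>X\<in>Pk_pre k. \<forall>Y\<in>Pk_pre k. Pk_pre_le k Y X \<longrightarrow> compat copies (\<subseteq>) (blocks Y) A"
proof -
  obtain X where X: "X \<subseteq> block ` A" "\<not> small k X"
    and dense: "\<forall>Y. \<not> small k (Y \<inter> X) \<longrightarrow> (\<exists>s\<in>copies. s \<subseteq> A \<inter> blocks Y)"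
    using copy_dense[OF A] by blast
  have XP: "X \<in> Pk_pre k"
    using X A block_position_in_Field unfolding Pk_pre_iff copies_def by blast
  have "compat copies (\<subseteq>) (blocks Y) A" if Y: "Y \<in> Pk_pre k" "Pk_pre_le k Y X" for Y
  proof -
    have "compat (Pk_pre k) (Pk_pre_le k) Y X"
      using Y reflp_onD[OF reflp_on_Pk_pre_le[OF k_card k_inf]] unfolding compat_def by blast
    then have "\<not> small k (Y \<inter> X)" using compat_Pk_pre_iff[OF k_card k_inf Y(1) XP] by blast
    then obtain s where "s \<in> copies" "s \<subseteq> A \<inter> blocks Y" using dense by blast
    then show ?thesis unfolding compat_def by blast
  qed
  then show ?thesis using XP by blast
qed

theorem complete_embedding_blocks:
  "complete_embedding (Pk_pre k) (Pk_pre_le k) copies (sep_le copies (\<subseteq>)) blocks"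
  unfolding complete_embedding_def
proof (intro conjI ballI impI)
  fix X assume "X \<in> Pk_pre k"
  then show "blocks X \<in> copies" by (rule blocks_in_copies_if_Pk_pre)
next
  fix X Y assume "Pk_pre_le k X Y"
  then show "sep_le copies (\<subseteq>) (blocks X) (blocks Y)" unfolding Pk_pre_le_iff by (rule sep_le_blocks)
next
  fix X Y assume "X \<in> Pk_pre k" "Y \<in> Pk_pre k"
  then show "(\<not> compat (Pk_pre k) (Pk_pre_le k) X Y) \<longleftrightarrow>
      (\<not> compat copies (sep_le copies (\<subseteq>)) (blocks X) (blocks Y))"
    using compat_sep_le_blocks_iff by blast
next
  fix A assume A: "A \<in> copies"
  obtain X where X: "X \<in> Pk_pre k"
    and dense: "\<forall>Y\<in>Pk_pre k. Pk_pre_le k Y X \<longrightarrow> compat copies (\<subseteq>) (blocks Y) A"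
    using blocks_dense[OF A] by blast
  have "compat copies (sep_le copies (\<subseteq>)) (blocks Y) A" if "Y \<in> Pk_pre k" "Pk_pre_le k Y X" for Y
    using dense that compat_sep_le_iff[OF reflp_on_copies transp_on_copies
        blocks_in_copies_if_Pk_pre[OF that(1)] A] by blast
  then show "\<exists>X\<in>Pk_pre k. \<forall>Y\<in>Pk_pre k. Pk_pre_le k Y X \<longrightarrow>
      compat copies (sep_le copies (\<subseteq>)) (blocks Y) A" using X by blast
qed

end

lemma cof_ge_infinite_Field:
  assumes k: "Card_order k" "infinite (Field k)" and r: "Well_order r" and cof: "cof_ge r k"
  shows "infinite (Field r)"
proof
  assume "finite (Field r)"
  moreover have "cofinal r (Field r)" unfolding cofinal_def using well_order_refl[OF r] by blast
  ultimately show False using cofinal_not_small[OF cof] small_finite[OF k] by blast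
qed

theorem mainTheorem8:
  fixes d :: "'a rel" and k :: "'k rel" and ds :: "'k \<Rightarrow> 'b rel"
  assumes "Well_order d"
    and "Card_order k"
    and "(natLeq, k) \<in> ordLeq"
    and "cof_eq (opow d) k"
    and "\<forall>\<xi> \<in> Field k. Well_order (ds \<xi>)"
    and "\<forall>\<xi> \<in> Field k. \<forall>\<zeta> \<in> Field k. \<xi> \<noteq> \<zeta> \<and> (\<xi>, \<zeta>) \<in> k \<longrightarrow> (ds \<xi>, ds \<zeta>) \<in> ordLeq"
    and "\<forall>\<xi> \<in> Field k. cof_ge (opow (ds \<xi>)) k"
    and "(opow d, osum k (\<lambda>\<xi>. opow (ds \<xi>))) \<in> ordIso"
  shows "\<exists>f. complete_embedding (Pk k) (Pk_le k)
              (sq_carrier (Pord d) (\<subseteq>)) (sq_le (Pord d) (\<subseteq>)) f"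
proof -
  let ?B = "\<lambda>\<xi>. opow (ds \<xi>)"
  obtain h where h: "iso (opow d) (osum k ?B) h"
    and wo: "Well_order (opow d)" "Well_order (osum k ?B)"
    using assms(8) unfolding ordIso_def by blast
  have k_inf: "infinite (Field k)"
    using assms(2,3) by (meson Card_order_iff_ordLeq_card_of infinite_iff_natLeq_ordLeq ordLeq_transitive)
  have B_wo: "\<forall>\<xi>\<in>Field k. Well_order (?B \<xi>)" using Well_order_osum_summand[OF wo(2)] by blast
  have B_mono: "\<forall>\<xi>\<in>Field k. \<forall>\<zeta>\<in>Field k. \<xi> \<noteq> \<zeta> \<and> (\<xi>, \<zeta>) \<in> k \<longrightarrow> ?B \<xi> \<le>o ?B \<zeta>"
    using assms(5,6) B_wo opow_mono_ordLeq by blast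
  have "Field (ds \<xi>) \<noteq> {}" if "\<xi> \<in> Field k" for \<xi>
    using cof_ge_infinite_Field[OF assms(2) k_inf] finite_Field_opow_if_empty B_wo assms(7) that by blast
  then have B_above: "\<forall>\<xi>\<in>Field k. \<forall>y\<in>Field (?B \<xi>). ?B \<xi> \<le>o Restr (?B \<xi>) {z. (y, z) \<in> ?B \<xi> \<and> z \<noteq> y}"
    using assms(5) B_wo opow_ordLeq_above by blast
  interpret block_sum "opow d" k ?B h
    using assms(2,4,7) k_inf wo(1) h B_wo B_mono B_above by unfold_locales (auto simp: cof_eq_def)
  have "Pord d = copies" unfolding Pord_def copies_def by simp
  then show ?thesis
    unfolding Pk_def Pk_le_def sq_carrier_def sq_le_def
    using complete_embedding_aquot[OF reflp_on_Pk_pre_le[OF k_card k_inf] transp_on_Pk_pre_le[OF k_card k_inf]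
        reflp_on_sep_le[OF reflp_on_copies transp_on_copies] transp_on_sep_le[OF reflp_on_copies transp_on_copies]
        complete_embedding_blocks] by auto
qed

end
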